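(* Let $T=((\Omega,\mathcal{A}),\{(\Omega,\mathcal{M}_i)\}_{i\in N},\{t_i\}_{i\in N})$ be a type space. The players' beliefs in $T$ are consistent if and only if there exists a common certainty component $S\subseteq\Omega$ such that the players' beliefs in the induced type space $T_S$ over $S$ are consistent.
   Context: A field on a set $X$ is a collection of subsets of $X$ containing $X$ and closed under complements and finite intersections. For a field $\mathcal{A}$ on $\Omega$, $\mathrm{pba}(\Omega,\mathcal{A})$ is the set of finitely additive nonnegative $P:\mathcal{A}\to\mathbb{R}$ with $P(\Omega)=1$; $B(\Omega,\mathcal{A})$ the sup-norm closure of the linear span of indicators of sets in $\mathcal{A}$; the space of bounded finitely additive set functions carries the weak* topology (weakest making $\mu\mapsto\int f\,d\mu$ continuous for all $f\in B(\Omega,\mathcal{A})$), $\overline{\,\cdot\,}^\ast$ denotes weak* closure. A type space is $((\Omega,\mathcal{A}),\{(\Omega,\mathcal{M}_i)\}_{i\in N},\{t_i\}_{i\in N})$ with $N$ a nonempty set of players, fields $\mathcal{M}_i\subseteq\mathcal{A}$ on a set $\Omega$, and $t_i:\Omega\times\mathcal{A}\to[0,1]$ with: $t_i(\omega,\cdot)\in\mathrm{pba}(\Omega,\mathcal{A})$; $t_i(\cdot,E)\in B(\Omega,\mathcal{M}_i)$ for all $E\in\mathcal{A}$; $t_i(\omega,E)=1$ whenever $E\in\mathcal{M}_i$, $\omega\in E$. For each player $i$, $\Pi_i=\overline{\mathrm{conv}\{t_i(\omega,\cdot):\omega\in\Omega\}}^\ast$ (equivalently the $P\in\mathrm{pba}(\Omega,\mathcal{A})$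 with $P(E\cap F)=\int_F t_i(\cdot,E)\,dP$ for all $E\in\mathcal{A},F\in\mathcal{M}_i$). The players' beliefs in a type space are consistent if $\bigcap_{i\in I}\Pi_i\ne\emptyset$ for every finite set $I$ of players. A nonempty $S\subseteq\Omega$ is a common certainty component if there is $E\in\mathcal{A}$ with $E\subseteq S$ and $t_i(\omega,E)=1$ for all $\omega\in S$ and all $i\in N$. The induced type space is $T_S=((S,\mathcal{A}^S),\{(S,\mathcal{M}_i^S)\}_{i\in N},\{t_i^S\}_{i\in N})$ with $\mathcal{A}^S=\{F\cap S:F\in\mathcal{A}\}$, $\mathcal{M}_i^S=\{F\cap S:F\in\mathcal{M}_i\}$, $t_i^S(\omega,F\cap S)=t_i(\omega,F)$ for $\omega\in S$, $F\in\mathcal{A}$ (this is a type space). *)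

theory Defs
  imports Complex_Main "HOL-Library.Indicator_Function"
begin

definition field_on :: "'w set \<Rightarrow> 'w set set \<Rightarrow> bool" where
  "field_on X F \<longleftrightarrow> F \<subseteq> Pow X \<and> X \<in> F \<and> (\<forall>E\<in>F. X - E \<in> F)
     \<and> (\<forall>E\<in>F. \<forall>G\<in>F. E \<inter> G \<in> F)"

definition pba :: "'w set \<Rightarrow> 'w set set \<Rightarrow> ('w set \<Rightarrow> real) set" where
  "pba X F = {P. (\<forall>E\<in>F. P E \<ge> 0) \<and> P X = 1
     \<and> (\<forall>E\<in>F. \<forall>G\<in>F. E \<inter> G = {} \<longrightarrow> P (E \<union> G) = P E + P G)}"

definition ba :: "'w set \<Rightarrow> 'w set set \<Rightarrow> ('w set \<Rightarrow> real) set" where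
  "ba X F = {\<mu>. (\<forall>E\<in>F. \<forall>G\<in>F. E \<inter> G = {} \<longrightarrow> \<mu> (E \<union> G) = \<mu> E + \<mu> G)
     \<and> (\<exists>K. \<forall>E\<in>F. \<bar>\<mu> E\<bar> \<le> K)}"

definition simple_fn :: "'w set \<Rightarrow> 'w set set \<Rightarrow> ('w \<Rightarrow> real) \<Rightarrow> bool" where
  "simple_fn X F g \<longleftrightarrow> (\<exists>(n::nat) c E. (\<forall>k<n. E k \<in> F) \<and>
     (\<forall>x\<in>X. g x = (\<Sum>k<n. c k * indicator (E k) x)))"

definition simple_int :: "'w set \<Rightarrow> ('w set \<Rightarrow> real) \<Rightarrow> ('w \<Rightarrow> real) \<Rightarrow> real" where
  "simple_int X \<mu> g = (\<Sum>y\<in>g ` X. y * \<mu> {x\<in>X. g x = y})"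

definition Bsp :: "'w set \<Rightarrow> 'w set set \<Rightarrow> ('w \<Rightarrow> real) set" where
  "Bsp X F = {f. \<forall>\<epsilon>>0. \<exists>g. simple_fn X F g \<and> (\<forall>x\<in>X. \<bar>f x - g x\<bar> \<le> \<epsilon>)}"

text \<open>Integral of f in B(X,F) w.r.t. a bounded finitely additive \<mu>: the
  continuous extension of the integral of simple functions.\<close>
definition fa_integral :: "'w set \<Rightarrow> 'w set set \<Rightarrow> ('w set \<Rightarrow> real) \<Rightarrow> ('w \<Rightarrow> real) \<Rightarrow> real" where
  "fa_integral X F \<mu> f = (THE r. \<forall>\<epsilon>>0. \<exists>\<delta>>0. \<forall>g. simple_fn X F g \<and> (\<forall>x\<in>X. \<bar>f x - g x\<bar> \<le> \<delta>)
      \<longrightarrow> \<bar>simple_int X \<mu> g - r\<bar> \<le> \<epsilon>)"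

text \<open>Weak* closure (in ba(X,F)) of a set C: membership unfolds to every basic
  weak* neighbourhood meeting C.\<close>
definition wstar_closure :: "'w set \<Rightarrow> 'w set set \<Rightarrow> ('w set \<Rightarrow> real) set \<Rightarrow> ('w set \<Rightarrow> real) set" where
  "wstar_closure X F C = {P \<in> ba X F. \<forall>Fs. finite Fs \<and> Fs \<subseteq> Bsp X F \<longrightarrow> (\<forall>\<epsilon>>0. \<exists>Q\<in>C.
      \<forall>f\<in>Fs. \<bar>fa_integral X F P f - fa_integral X F Q f\<bar> < \<epsilon>)}"

definition types_conv :: "'w set \<Rightarrow> ('w \<Rightarrow> 'w set \<Rightarrow> real) \<Rightarrow> ('w set \<Rightarrow> real) set" where
  "types_conv X ti = {Q. \<exists>(n::nat) a w. n \<ge> 1 \<and> (\<forall>k<n. a k \<ge> 0 \<and> w k \<in> X) \<and> (\<Sum>k<n. a k) = 1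
      \<and> Q = (\<lambda>E. \<Sum>k<n. a k * ti (w k) E)}"

definition Pi_set :: "'w set \<Rightarrow> 'w set set \<Rightarrow> ('w \<Rightarrow> 'w set \<Rightarrow> real) \<Rightarrow> ('w set \<Rightarrow> real) set" where
  "Pi_set X F ti = wstar_closure X F (types_conv X ti)"

definition type_space ::
  "'w set \<Rightarrow> 'w set set \<Rightarrow> 'i set \<Rightarrow> ('i \<Rightarrow> 'w set set) \<Rightarrow> ('i \<Rightarrow> 'w \<Rightarrow> 'w set \<Rightarrow> real) \<Rightarrow> bool" where
  "type_space X A N M t \<longleftrightarrow> N \<noteq> {} \<and> field_on X A \<and>
     (\<forall>i\<in>N. field_on X (M i) \<and> M i \<subseteq> A \<and>
        (\<forall>x\<in>X. \<forall>E\<in>A. 0 \<le> t i x E \<and> t i x E \<le> 1) \<and>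
        (\<forall>x\<in>X. t i x \<in> pba X A) \<and>
        (\<forall>E\<in>A. (\<lambda>x. t i x E) \<in> Bsp X (M i)) \<and>
        (\<forall>E\<in>M i. \<forall>x\<in>E. t i x E = 1))"

definition consistent ::
  "'w set \<Rightarrow> 'w set set \<Rightarrow> 'i set \<Rightarrow> ('i \<Rightarrow> 'w set set) \<Rightarrow> ('i \<Rightarrow> 'w \<Rightarrow> 'w set \<Rightarrow> real) \<Rightarrow> bool" where
  "consistent X A N M t \<longleftrightarrow> (\<forall>I. finite I \<and> I \<subseteq> N \<longrightarrow> (\<Inter>i\<in>I. Pi_set X A (t i)) \<noteq> {})"

definition cc_component ::
  "'w set \<Rightarrow> 'w set set \<Rightarrow> 'i set \<Rightarrow> ('i \<Rightarrow> 'w \<Rightarrow> 'w set \<Rightarrow> real) \<Rightarrow> 'w set \<Rightarrow> bool" where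
  "cc_component X A N t S \<longleftrightarrow> S \<noteq> {} \<and> S \<subseteq> X \<and>
     (\<exists>E\<in>A. E \<subseteq> S \<and> (\<forall>x\<in>S. \<forall>i\<in>N. t i x E = 1))"

text \<open>Trace field F^S and induced types t_i^S(x, F \<inter> S) = t_i(x, F).\<close>
definition trace :: "'w set set \<Rightarrow> 'w set \<Rightarrow> 'w set set" where
  "trace F S = {G \<inter> S | G. G \<in> F}"

definition induced_t :: "'w set set \<Rightarrow> 'w set \<Rightarrow> ('i \<Rightarrow> 'w \<Rightarrow> 'w set \<Rightarrow> real) \<Rightarrow> ('i \<Rightarrow> 'w \<Rightarrow> 'w set \<Rightarrow> real)" where
  "induced_t A S t = (\<lambda>i x H. t i x (SOME G. G \<in> A \<and> H = G \<inter> S))"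

end

theory Submission
  imports Defs
begin

text \<open>If the beliefs are consistent, \<Omega> itself is a common certainty component (take E = \<Omega>),
  and the induced type space on \<Omega> has the same types on \<A>. Conversely, let E \<in> \<A>, E \<subseteq> S,
  witness common certainty of S. Every type at a state of S, hence every element of the set
  \<Pi>_i of the induced type space, is a probability concentrated on E. Such a P lifts to \<A> by
  F \<mapsto> P(F \<inter> S), and since E \<in> \<A>, integrals over (\<Omega>, \<A>) against the lift agree with integrals
  over the trace field against P. So weak* approximation of P by convex combinations of induced
  types lifts to weak* approximation of the lift by the same combinations of the original types,
  and a common prior of the induced type space lifts to one of the original.\<close>

lemma field_on_top: "field_on X F \<Longrightarrow> X \<in> F"
  unfolding field_on_def by blast

lemma field_on_subset: "field_on X F \<Longrightarrow> B \<in> F \<Longrightarrow> B \<subseteq> X"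
  unfolding field_on_def by blast

lemma field_on_compl: "field_on X F \<Longrightarrow> B \<in> F \<Longrightarrow> X - B \<in> F"
  unfolding field_on_def by blast

lemma field_on_Int: "field_on X F \<Longrightarrow> B \<in> F \<Longrightarrow> C \<in> F \<Longrightarrow> B \<inter> C \<in> F"
  unfolding field_on_def by blast

lemma field_on_empty: "field_on X F \<Longrightarrow> {} \<in> F"
  using field_on_compl[OF _ field_on_top] by fastforce

lemma field_on_Diff:
  assumes "field_on X F" "B \<in> F" "C \<in> F" shows "B - C \<in> F"
proof -
  have "B - C = B \<inter> (X - C)" using field_on_subset[OF assms(1,2)] by blast
  then show ?thesis using assms by (simp add: field_on_Int field_on_compl)
qed

lemma field_on_Un:
  assumes "field_on X F" "B \<in> F" "C \<in> F" shows "B \<union> C \<in> F"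
proof -
  have "B \<union> C = X - ((X - B) \<inter> (X - C))" using assms field_on_subset by blast
  then show ?thesis using assms by (simp add: field_on_Int field_on_compl)
qed

lemma field_on_trace:
  assumes "field_on X A" "S \<subseteq> X"
  shows "field_on S (trace A S)"
  unfolding field_on_def
proof (intro conjI ballI)
  show "trace A S \<subseteq> Pow S" "S \<in> trace A S"
    unfolding trace_def using field_on_top[OF assms(1)] assms(2) by blast+
  fix B C assume "B \<in> trace A S" "C \<in> trace A S"
  then obtain G H where "G \<in> A" "B = G \<inter> S" "H \<in> A" "C = H \<inter> S"
    unfolding trace_def by blast
  moreover have "S - B = (X - G) \<inter> S" "B \<inter> C = (G \<inter> H) \<inter> S"
    using calculation assms(2) by blast+
  ultimately show "S - B \<in> trace A S" "B \<inter> C \<in> trace A S"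
    unfolding trace_def using assms(1) by (blast intro: field_on_compl field_on_Int)+
qed

lemma Int_in_trace: "G \<in> A \<Longrightarrow> G \<inter> S \<in> trace A S"
  unfolding trace_def by blast

lemma subset_in_trace: "G \<in> A \<Longrightarrow> G \<subseteq> S \<Longrightarrow> G \<in> trace A S"
  using Int_in_trace[of G A S] by (simp add: Int_absorb2)

lemma trace_self: "field_on X A \<Longrightarrow> trace A X = A"
  unfolding trace_def using field_on_subset by (fastforce simp: Int_absorb2)

definition fin_additive :: "'w set set \<Rightarrow> ('w set \<Rightarrow> real) \<Rightarrow> bool" where
  "fin_additive F \<mu> \<longleftrightarrow> (\<forall>B\<in>F. \<forall>C\<in>F. B \<inter> C = {} \<longrightarrow> \<mu> (B \<union> C) = \<mu> B + \<mu> C)"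

lemma pba_altdef: "P \<in> pba X F \<longleftrightarrow> (\<forall>B\<in>F. P B \<ge> 0) \<and> P X = 1 \<and> fin_additive F P"
  unfolding pba_def fin_additive_def by blast

lemma ba_altdef: "\<mu> \<in> ba X F \<longleftrightarrow> fin_additive F \<mu> \<and> (\<exists>K. \<forall>B\<in>F. \<bar>\<mu> B\<bar> \<le> K)"
  unfolding ba_def fin_additive_def by blast

lemma fin_additiveD:
  "fin_additive F \<mu> \<Longrightarrow> B \<in> F \<Longrightarrow> C \<in> F \<Longrightarrow> B \<inter> C = {} \<Longrightarrow> \<mu> (B \<union> C) = \<mu> B + \<mu> C"
  unfolding fin_additive_def by blast

lemma fin_additive_empty: "field_on X F \<Longrightarrow> fin_additive F \<mu> \<Longrightarrow> \<mu> {} = 0"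
  using fin_additiveD[of F \<mu> "{}" "{}"] field_on_empty by fastforce

lemma fin_additive_split:
  assumes "field_on X F" "fin_additive F \<mu>" "B \<in> F" "C \<in> F"
  shows "\<mu> B = \<mu> (B \<inter> C) + \<mu> (B - C)"
  using fin_additiveD[OF assms(2) field_on_Int[OF assms(1,3,4)] field_on_Diff[OF assms(1,3,4)]]
  by (simp add: Int_Diff_Un Int_Diff_disjoint)

lemma fin_additive_UN:
  assumes "field_on X F" "fin_additive F \<mu>" "finite V"
    and "\<forall>y\<in>V. L y \<in> F" "disjoint_family_on L V"
  shows "(\<Union>y\<in>V. L y) \<in> F \<and> \<mu> (\<Union>y\<in>V. L y) = (\<Sum>y\<in>V. \<mu> (L y))"
  using assms(3-5)
proof (induction V rule: finite_induct)
  case empty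
  then show ?case using field_on_empty[OF assms(1)] fin_additive_empty[OF assms(1,2)] by simp
next
  case (insert a V)
  then have IH: "(\<Union>y\<in>V. L y) \<in> F" "\<mu> (\<Union>y\<in>V. L y) = (\<Sum>y\<in>V. \<mu> (L y))"
    by (auto simp: disjoint_family_on_def)
  have "L a \<inter> (\<Union>y\<in>V. L y) = {}"
    using insert.prems(2) insert.hyps(2) by (fastforce simp: disjoint_family_on_def)
  then show ?case
    using IH insert fin_additiveD[OF assms(2), of "L a" "\<Union>y\<in>V. L y"]
    by (simp add: field_on_Un[OF assms(1)])
qed

lemma fin_additive_sum_abs_le:
  assumes "field_on X F" "fin_additive F \<mu>" "\<forall>B\<in>F. \<bar>\<mu> B\<bar> \<le> K"
    and "finite V" "\<forall>y\<in>V. L y \<in> F" "disjoint_family_on L V"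
  shows "(\<Sum>y\<in>V. \<bar>\<mu> (L y)\<bar>) \<le> 2 * K"
proof -
  let ?Vpos = "{y\<in>V. \<mu> (L y) \<ge> 0}" and ?Vneg = "{y\<in>V. \<mu> (L y) < 0}"
  have sub: "disjoint_family_on L ?Vpos" "disjoint_family_on L ?Vneg"
    using assms(6) by (auto intro: disjoint_family_on_mono)
  have pos: "(\<Union>y\<in>?Vpos. L y) \<in> F \<and> \<mu> (\<Union>y\<in>?Vpos. L y) = (\<Sum>y\<in>?Vpos. \<mu> (L y))"
    using fin_additive_UN[OF assms(1,2) _ _ sub(1)] assms(4,5) by auto
  have neg: "(\<Union>y\<in>?Vneg. L y) \<in> F \<and> \<mu> (\<Union>y\<in>?Vneg. L y) = (\<Sum>y\<in>?Vneg. \<mu> (L y))"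
    using fin_additive_UN[OF assms(1,2) _ _ sub(2)] assms(4,5) by auto
  have "(\<Sum>y\<in>V. \<bar>\<mu> (L y)\<bar>) = (\<Sum>y\<in>?Vpos. \<mu> (L y)) - (\<Sum>y\<in>?Vneg. \<mu> (L y))"
  proof -
    have "V = ?Vpos \<union> ?Vneg" "?Vpos \<inter> ?Vneg = {}" by auto
    then have "(\<Sum>y\<in>V. \<bar>\<mu> (L y)\<bar>) = (\<Sum>y\<in>?Vpos. \<bar>\<mu> (L y)\<bar>) + (\<Sum>y\<in>?Vneg. \<bar>\<mu> (L y)\<bar>)"
      using assms(4) by (metis (no_types, lifting) finite_Un sum.union_disjoint)
    then show ?thesis by (simp add: sum_negf[symmetric])
  qed
  also have "\<dots> \<le> 2 * K"
  proof -
    have "\<mu> (\<Union>y\<in>?Vpos. L y) \<le> K" "- \<mu> (\<Union>y\<in>?Vneg. L y) \<le> K"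
      using pos neg assms(3) by (metis abs_le_D1 abs_le_D2)+
    then show ?thesis using pos neg by linarith
  qed
  finally show ?thesis .
qed

lemma pba_le_one:
  assumes field: "field_on X F" and "P \<in> pba X F" and B: "B \<in> F"
  shows "P B \<le> 1"
proof -
  have add: "fin_additive F P" and "P X = 1" and "P (X - B) \<ge> 0"
    using assms field_on_compl[OF field B] unfolding pba_altdef by auto
  moreover have "X \<inter> B = B" using field_on_subset[OF field B] by blast
  ultimately show ?thesis
    using fin_additive_split[OF field add field_on_top[OF field] B] by simp
qed

lemma pba_subset_ba:
  assumes "field_on X F" shows "pba X F \<subseteq> ba X F"
proof
  fix P assume P: "P \<in> pba X F"
  then have "\<forall>B\<in>F. \<bar>P B\<bar> \<le> 1" using pba_le_one[OF assms P] unfolding pba_altdef by auto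
  then show "P \<in> ba X F" using P unfolding ba_altdef pba_altdef by blast
qed

lemma pba_concentrated:
  assumes "field_on X F" "P \<in> pba X F" "E \<in> F" "P E = 1" "G \<in> F"
  shows "P G = P (G \<inter> E)"
proof -
  have add: "fin_additive F P" and nonneg: "\<And>B. B \<in> F \<Longrightarrow> P B \<ge> 0"
    using assms(2) unfolding pba_altdef by blast+
  have GE: "G - E \<in> F" using field_on_Diff[OF assms(1,5,3)] .
  have "P E + P (G - E) = P (E \<union> (G - E))"
    using fin_additiveD[OF add assms(3) GE] by auto
  also have "\<dots> \<le> 1"
    using pba_le_one[OF assms(1,2) field_on_Un[OF assms(1,3) GE]] .
  finally have "P (G - E) = 0" using assms(4) nonneg[OF GE] by linarith
  then show ?thesis using fin_additive_split[OF assms(1) add assms(5,3)] by simp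
qed

lemma pba_trace:
  assumes field: "field_on X A" and "S \<subseteq> X" and \<mu>: "\<mu> \<in> pba X A"
    and E: "E \<in> A" "E \<subseteq> S" "\<mu> E = 1"
    and rel: "\<forall>G\<in>A. \<nu> (G \<inter> S) = \<mu> G"
  shows "\<nu> \<in> pba S (trace A S)"
  unfolding pba_altdef fin_additive_def
proof (intro conjI ballI impI)
  fix B C assume "B \<in> trace A S" "C \<in> trace A S" and disj: "B \<inter> C = {}"
  then obtain G H where GH: "G \<in> A" "H \<in> A" and BC: "B = G \<inter> S" "C = H \<inter> S"
    unfolding trace_def by blast
  have conc: "\<And>G. G \<in> A \<Longrightarrow> \<mu> G = \<mu> (G \<inter> E)"
    using pba_concentrated[OF field \<mu> E(1,3)] .
  have "\<nu> (B \<union> C) = \<mu> ((G \<union> H) \<inter> E)"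
    using rel conc field_on_Un[OF field GH] BC by (metis Int_Un_distrib2)
  also have "\<dots> = \<mu> (G \<inter> E) + \<mu> (H \<inter> E)"
    using fin_additiveD[of A \<mu> "G \<inter> E" "H \<inter> E"] \<mu> field_on_Int[OF field _ E(1)] GH disj BC E(2)
    unfolding pba_altdef by (fastforce simp: Int_Un_distrib2)
  also have "\<dots> = \<nu> B + \<nu> C"
    using rel conc GH BC by metis
  finally show "\<nu> (B \<union> C) = \<nu> B + \<nu> C" .
next
  show "\<nu> S = 1"
    using rel field_on_top[OF field] \<mu> \<open>S \<subseteq> X\<close> unfolding pba_altdef by (metis Int_absorb1)
  show "\<nu> B \<ge> 0" if "B \<in> trace A S" for B
    using that rel \<mu> unfolding trace_def pba_altdef by force
qed

lemma pba_lift: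
  assumes "\<nu> \<in> pba S (trace A S)" "S \<subseteq> X"
  shows "(\<lambda>G. \<nu> (G \<inter> S)) \<in> pba X A"
  unfolding pba_altdef fin_additive_def
proof (intro conjI ballI impI)
  fix G H assume "G \<in> A" "H \<in> A" "G \<inter> H = {}"
  then show "\<nu> ((G \<union> H) \<inter> S) = \<nu> (G \<inter> S) + \<nu> (H \<inter> S)"
    using fin_additiveD[of "trace A S" \<nu> "G \<inter> S" "H \<inter> S"] assms(1)
    unfolding pba_altdef by (auto simp: Int_in_trace Int_Un_distrib2)
qed (use assms in \<open>auto simp: pba_altdef Int_in_trace Int_absorb1\<close>)

lemma simple_fn_finite_range:
  assumes "simple_fn X F g" shows "finite (g ` X)"
proof -
  obtain n and c :: "nat \<Rightarrow> real" and E where g: "\<forall>x\<in>X. g x = (\<Sum>k<n. c k * indicator (E k) x)"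
    using assms unfolding simple_fn_def by blast
  have "g ` X \<subseteq> (\<lambda>K. \<Sum>k\<in>K. c k) ` Pow {..<n}"
  proof
    fix y assume "y \<in> g ` X"
    then obtain x where "x \<in> X" "y = g x" by blast
    then have "y = (\<Sum>k\<in>{..<n} \<inter> {k. x \<in> E k}. c k)"
      using g by (simp add: sum.inter_filter indicator_def if_distrib cong: if_cong)
    then show "y \<in> (\<lambda>K. \<Sum>k\<in>K. c k) ` Pow {..<n}" by blast
  qed
  then show ?thesis by (rule finite_subset) simp
qed

lemma simple_fn_level_set:
  assumes field: "field_on X F" and "simple_fn X F g"
  shows "{x\<in>X. g x = y} \<in> F"
proof -
  obtain n and c :: "nat \<Rightarrow> real" and E where E: "\<forall>k<n. E k \<in> F"
    and g: "\<forall>x\<in>X. g x = (\<Sum>k<n. c k * indicator (E k) x)"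
    using assms(2) unfolding simple_fn_def by blast
  have "{x\<in>X. (\<Sum>k<m. c k * indicator (E k) x) = y} \<in> F" if "m \<le> n" for m y
    using that
  proof (induction m arbitrary: y)
    case 0
    then show ?case using field_on_top[OF field] field_on_empty[OF field] by (cases "y = 0") auto
  next
    case (Suc m)
    let ?L = "\<lambda>y. {x\<in>X. (\<Sum>k<m. c k * indicator (E k) x) = y}"
    have "{x\<in>X. (\<Sum>k<Suc m. c k * indicator (E k) x) = y} = (?L (y - c m) \<inter> E m) \<union> (?L y - E m)"
      (is "?lhs = ?rhs")
    proof (rule set_eqI)
      show "x \<in> ?lhs \<longleftrightarrow> x \<in> ?rhs" for x by (cases "x \<in> E m") auto
    qed
    moreover have "?L (y - c m) \<in> F" "?L y \<in> F" "E m \<in> F"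
      using Suc E by auto
    ultimately show ?case
      by (simp add: field_on_Un[OF field] field_on_Int[OF field] field_on_Diff[OF field])
  qed
  moreover have "{x\<in>X. g x = y} = {x\<in>X. (\<Sum>k<n. c k * indicator (E k) x) = y}"
    using g by auto
  ultimately show ?thesis by simp
qed

lemma simple_fn_add:
  assumes "simple_fn X F g" "simple_fn X F h"
  shows "simple_fn X F (\<lambda>x. g x + h x)"
proof -
  obtain m and c :: "nat \<Rightarrow> real" and E where E: "\<forall>k<m. E k \<in> F"
    and g: "\<forall>x\<in>X. g x = (\<Sum>k<m. c k * indicator (E k) x)"
    using assms(1) unfolding simple_fn_def by blast
  obtain n and d :: "nat \<Rightarrow> real" and G where G: "\<forall>k<n. G k \<in> F"
    and h: "\<forall>x\<in>X. h x = (\<Sum>k<n. d k * indicator (G k) x)"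
    using assms(2) unfolding simple_fn_def by blast
  have split: "(\<Sum>k<m + n. u k) = (\<Sum>k<m. u k) + (\<Sum>k<n. u (m + k))" for u :: "nat \<Rightarrow> real"
    by (induction n) simp_all
  define b where "b k = (if k < m then c k else d (k - m))" for k
  define B where "B k = (if k < m then E k else G (k - m))" for k
  have "\<forall>k<m + n. B k \<in> F" using E G unfolding B_def by auto
  moreover have "\<forall>x\<in>X. g x + h x = (\<Sum>k<m + n. b k * indicator (B k) x)"
    unfolding split using g h by (simp add: b_def B_def)
  ultimately show ?thesis unfolding simple_fn_def by blast
qed

lemma simple_fn_indicator_mult:
  assumes "field_on X F" "simple_fn X F g" "B \<in> F"
  shows "simple_fn X F (\<lambda>x. indicator B x * g x)"
proof -
  obtain n and c :: "nat \<Rightarrow> real" and E where E: "\<forall>k<n. E k \<in> F"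
    and g: "\<forall>x\<in>X. g x = (\<Sum>k<n. c k * indicator (E k) x)"
    using assms(2) unfolding simple_fn_def by blast
  have "\<forall>k<n. E k \<inter> B \<in> F" using E assms(3) field_on_Int[OF assms(1)] by blast
  moreover have "\<forall>x\<in>X. indicator B x * g x = (\<Sum>k<n. c k * indicator (E k \<inter> B) x)"
    using g by (simp add: sum_distrib_left indicator_def)
  ultimately show ?thesis unfolding simple_fn_def
    by (intro exI[of _ n] exI[of _ c] exI[of _ "\<lambda>k. E k \<inter> B"]) simp
qed

lemma simple_fn_indicator: "B \<in> F \<Longrightarrow> simple_fn X F (indicator B)"
  unfolding simple_fn_def
  by (intro exI[of _ "1::nat"] exI[of _ "\<lambda>_. 1::real"] exI[of _ "\<lambda>_. B"]) simp

lemma simple_fn_trace: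
  assumes "simple_fn X A g" "S \<subseteq> X"
  shows "simple_fn S (trace A S) g"
proof -
  obtain n and c :: "nat \<Rightarrow> real" and E where E: "\<forall>k<n. E k \<in> A"
    and g: "\<forall>x\<in>X. g x = (\<Sum>k<n. c k * indicator (E k) x)"
    using assms(1) unfolding simple_fn_def by blast
  have "\<forall>k<n. E k \<inter> S \<in> trace A S" using E by (simp add: Int_in_trace)
  moreover have "\<forall>x\<in>S. g x = (\<Sum>k<n. c k * indicator (E k \<inter> S) x)"
    using g assms(2) by (auto simp: indicator_def)
  ultimately show ?thesis unfolding simple_fn_def
    by (intro exI[of _ n] exI[of _ c] exI[of _ "\<lambda>k. E k \<inter> S"]) simp
qed

lemma simple_fn_trace_extend:
  assumes "simple_fn S (trace A S) g"
  obtains h where "simple_fn X A h" "\<forall>x\<in>S. h x = g x"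
proof -
  obtain n and c :: "nat \<Rightarrow> real" and E where E: "\<forall>k<n. E k \<in> trace A S"
    and g: "\<forall>x\<in>S. g x = (\<Sum>k<n. c k * indicator (E k) x)"
    using assms unfolding simple_fn_def by blast
  have "\<forall>k. \<exists>G. k < n \<longrightarrow> G \<in> A \<and> E k = G \<inter> S" using E unfolding trace_def by blast
  then obtain G where G: "\<And>k. k < n \<Longrightarrow> G k \<in> A \<and> E k = G k \<inter> S" by metis
  define h where "h x = (\<Sum>k<n. c k * indicator (G k) x)" for x
  have "simple_fn X A h" unfolding simple_fn_def h_def using G by blast
  moreover have "\<forall>x\<in>S. h x = g x" using g G unfolding h_def by (auto simp: indicator_def)
  ultimately show thesis by (rule that)
qed

lemma simple_fn_glue:
  assumes field: "field_on X A" and "E \<in> A" "E \<subseteq> S"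
    and "simple_fn S (trace A S) g" "simple_fn X A h"
  obtains u where "simple_fn X A u" "\<forall>x\<in>E. u x = g x" "\<forall>x\<in>X - E. u x = h x"
proof -
  obtain g' where g': "simple_fn X A g'" "\<forall>x\<in>S. g' x = g x"
    using simple_fn_trace_extend[OF assms(4)] .
  define u where "u x = indicator E x * g' x + indicator (X - E) x * h x" for x
  have "simple_fn X A u" unfolding u_def
    using assms g' by (intro simple_fn_add simple_fn_indicator_mult field_on_compl) auto
  moreover have "\<forall>x\<in>E. u x = g x" "\<forall>x\<in>X - E. u x = h x"
    using g' \<open>E \<subseteq> S\<close> unfolding u_def by auto
  ultimately show thesis by (rule that)
qed

lemma Bsp_trace:
  assumes "f \<in> Bsp X A" "S \<subseteq> X"
  shows "f \<in> Bsp S (trace A S)"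
  using assms simple_fn_trace unfolding Bsp_def by blast

lemma indicator_in_Bsp: "B \<in> F \<Longrightarrow> indicator B \<in> Bsp X F"
  unfolding Bsp_def using simple_fn_indicator by force

definition has_fa_integral ::
  "'w set \<Rightarrow> 'w set set \<Rightarrow> ('w set \<Rightarrow> real) \<Rightarrow> ('w \<Rightarrow> real) \<Rightarrow> real \<Rightarrow> bool" where
  "has_fa_integral X F \<mu> f r \<longleftrightarrow> (\<forall>\<epsilon>>0. \<exists>\<delta>>0. \<forall>g. simple_fn X F g \<and> (\<forall>x\<in>X. \<bar>f x - g x\<bar> \<le> \<delta>)
      \<longrightarrow> \<bar>simple_int X \<mu> g - r\<bar> \<le> \<epsilon>)"

lemma fa_integral_eqI:
  assumes "\<And>r. has_fa_integral X A \<mu> f r \<longleftrightarrow> has_fa_integral S B \<nu> f r"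
  shows "fa_integral X A \<mu> f = fa_integral S B \<nu> f"
  unfolding fa_integral_def has_fa_integral_def[symmetric] assms ..

lemma fa_integral_unique:
  assumes f: "f \<in> Bsp X F" and r: "has_fa_integral X F \<mu> f r"
  shows "fa_integral X F \<mu> f = r"
  unfolding fa_integral_def has_fa_integral_def[symmetric]
proof (rule the_equality)
  show "has_fa_integral X F \<mu> f r" by (fact r)
  fix r' assume r': "has_fa_integral X F \<mu> f r'"
  show "r' = r"
  proof (rule ccontr)
    assume "r' \<noteq> r"
    define \<epsilon> where "\<epsilon> = \<bar>r - r'\<bar> / 3"
    have "\<epsilon> > 0" using \<open>r' \<noteq> r\<close> unfolding \<epsilon>_def by simp
    then obtain \<delta> \<delta>' where "\<delta> > 0" "\<delta>' > 0"
      and \<delta>: "\<forall>g. simple_fn X F g \<and> (\<forall>x\<in>X. \<bar>f x - g x\<bar> \<le> \<delta>) \<longrightarrow> \<bar>simple_int X \<mu> g - r\<bar> \<le> \<epsilon>"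
      and \<delta>': "\<forall>g. simple_fn X F g \<and> (\<forall>x\<in>X. \<bar>f x - g x\<bar> \<le> \<delta>') \<longrightarrow> \<bar>simple_int X \<mu> g - r'\<bar> \<le> \<epsilon>"
      using r r' unfolding has_fa_integral_def by blast
    moreover have "min \<delta> \<delta>' > 0" using \<open>\<delta> > 0\<close> \<open>\<delta>' > 0\<close> by simp
    ultimately obtain g where "simple_fn X F g" "\<forall>x\<in>X. \<bar>f x - g x\<bar> \<le> min \<delta> \<delta>'"
      using f unfolding Bsp_def by blast
    then have "\<bar>simple_int X \<mu> g - r\<bar> \<le> \<epsilon>" "\<bar>simple_int X \<mu> g - r'\<bar> \<le> \<epsilon>"
      using \<delta> \<delta>' by auto
    moreover have "\<bar>r - r'\<bar> \<le> \<bar>simple_int X \<mu> g - r\<bar> + \<bar>simple_int X \<mu> g - r'\<bar>" by arith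
    moreover have "3 * \<epsilon> = \<bar>r - r'\<bar>" unfolding \<epsilon>_def by simp
    ultimately show False using \<open>\<epsilon> > 0\<close> by linarith
  qed
qed

lemma simple_int_cong_measure:
  assumes "field_on X F" "simple_fn X F g" "\<forall>B\<in>F. \<mu> B = \<nu> B"
  shows "simple_int X \<mu> g = simple_int X \<nu> g"
  unfolding simple_int_def using simple_fn_level_set[OF assms(1,2)] assms(3) by simp

lemma fa_integral_cong:
  assumes "field_on X F" "\<forall>B\<in>F. \<mu> B = \<nu> B"
  shows "fa_integral X F \<mu> f = fa_integral X F \<nu> f"
  using simple_int_cong_measure[OF assms(1) _ assms(2)]
  by (intro fa_integral_eqI) (simp add: has_fa_integral_def)

lemma simple_int_cong:
  assumes "\<forall>x\<in>E. g x = h x" shows "simple_int E \<mu> g = simple_int E \<mu> h"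
proof -
  have "g ` E = h ` E" "\<And>y. {x\<in>E. g x = y} = {x\<in>E. h x = y}" using assms by auto
  then show ?thesis unfolding simple_int_def by simp
qed

lemma simple_int_subset:
  assumes "E \<subseteq> Y" "finite (g ` Y)" "\<mu> {} = 0"
    and "\<And>y. \<mu> {x\<in>Y. g x = y} = \<mu> {x\<in>E. g x = y}"
  shows "simple_int Y \<mu> g = simple_int E \<mu> g"
proof -
  have "simple_int Y \<mu> g = (\<Sum>y\<in>g ` Y. y * \<mu> {x\<in>E. g x = y})"
    unfolding simple_int_def using assms(4) by simp
  also have "\<dots> = (\<Sum>y\<in>g ` E. y * \<mu> {x\<in>E. g x = y})"
  proof (intro sum.mono_neutral_right[OF assms(2)])
    show "\<forall>y\<in>g ` Y - g ` E. y * \<mu> {x\<in>E. g x = y} = 0"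
    proof
      fix y assume "y \<in> g ` Y - g ` E"
      then have "{x\<in>E. g x = y} = {}" by blast
      then show "y * \<mu> {x\<in>E. g x = y} = 0" by (simp only: assms(3) mult_zero_right)
    qed
  qed (use assms(1) in blast)
  finally show ?thesis unfolding simple_int_def .
qed

lemma simple_int_near_indicator:
  assumes field: "field_on X F" and add: "fin_additive F \<mu>" and K: "\<forall>B\<in>F. \<bar>\<mu> B\<bar> \<le> K"
    and H: "H \<in> F" and g: "simple_fn X F g"
    and \<delta>: "0 \<le> \<delta>" "\<delta> < 1/2" and near: "\<forall>x\<in>X. \<bar>indicator H x - g x\<bar> \<le> \<delta>"
  shows "\<bar>simple_int X \<mu> g - \<mu> H\<bar> \<le> \<delta> * (2 * K)"
proof -
  define V where "V = g ` X"
  define L where "L y = {x\<in>X. g x = y}" for y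
  define step :: "real \<Rightarrow> real" where "step y = (if 1/2 < y then 1 else 0)" for y
  have V: "finite V" "\<forall>y\<in>V. L y \<in> F" "disjoint_family_on L V"
    unfolding V_def L_def disjoint_family_on_def
    using simple_fn_finite_range[OF g] simple_fn_level_set[OF field g] by auto
  have step_g: "step (g x) = indicator H x \<and> \<bar>g x - step (g x)\<bar> \<le> \<delta>" if "x \<in> X" for x
  proof -
    have "\<bar>indicator H x - g x\<bar> \<le> \<delta>" using near that by blast
    then show ?thesis using \<delta> unfolding step_def by (cases "x \<in> H") (auto simp: abs_le_iff)
  qed
  have step_close: "\<bar>y - step y\<bar> \<le> \<delta>" if "y \<in> V" for y
    using step_g that unfolding V_def by blast
  have "H = (\<Union>y\<in>{y\<in>V. 1/2 < y}. L y)"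
    using field_on_subset[OF field H] step_g
    unfolding V_def L_def step_def by (fastforce simp: indicator_def split: if_splits)
  moreover have "disjoint_family_on L {y\<in>V. 1/2 < y}"
    by (rule disjoint_family_on_mono[OF _ V(3)]) blast
  ultimately have "\<mu> H = (\<Sum>y\<in>{y\<in>V. 1/2 < y}. \<mu> (L y))"
    using fin_additive_UN[OF field add, of "{y\<in>V. 1/2 < y}" L] V by auto
  also have "\<dots> = (\<Sum>y\<in>V. step y * \<mu> (L y))"
    using V(1) unfolding step_def by (auto simp: sum.inter_filter intro!: sum.cong)
  finally have "simple_int X \<mu> g - \<mu> H = (\<Sum>y\<in>V. (y - step y) * \<mu> (L y))"
    unfolding simple_int_def V_def L_def by (simp add: sum_subtractf[symmetric] left_diff_distrib)
  also have "\<bar>\<dots>\<bar> \<le> (\<Sum>y\<in>V. \<delta> * \<bar>\<mu> (L y)\<bar>)"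
    using step_close by (intro order_trans[OF sum_abs sum_mono]) (simp add: abs_mult mult_right_mono)
  also have "\<dots> \<le> \<delta> * (2 * K)"
    using fin_additive_sum_abs_le[OF field add K V] \<delta>(1) by (simp add: sum_distrib_left[symmetric] mult_left_mono)
  finally show ?thesis .
qed

lemma fa_integral_indicator:
  assumes field: "field_on X F" and "\<mu> \<in> ba X F" and H: "H \<in> F"
  shows "fa_integral X F \<mu> (indicator H) = \<mu> H"
proof (rule fa_integral_unique[OF indicator_in_Bsp[OF H]])
  obtain K where add: "fin_additive F \<mu>" and K: "\<forall>B\<in>F. \<bar>\<mu> B\<bar> \<le> K"
    using assms(2) unfolding ba_altdef by blast
  have "K \<ge> 0" using K field_on_top[OF field] by force
  show "has_fa_integral X F \<mu> (indicator H) (\<mu> H)"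
    unfolding has_fa_integral_def
  proof (intro allI impI)
    fix \<epsilon> :: real assume "\<epsilon> > 0"
    define \<delta> where "\<delta> = min (1/4) (\<epsilon> / (2 * K + 1))"
    have "\<delta> > 0" "\<delta> < 1/2" using \<open>\<epsilon> > 0\<close> \<open>K \<ge> 0\<close> unfolding \<delta>_def by auto
    have "\<delta> * (2 * K) \<le> \<epsilon> / (2 * K + 1) * (2 * K + 1)"
      using \<open>K \<ge> 0\<close> \<open>\<delta> > 0\<close> unfolding \<delta>_def
      by (intro mult_mono) auto
    then have "\<delta> * (2 * K) \<le> \<epsilon>" using \<open>K \<ge> 0\<close> by simp
    then show "\<exists>\<delta>>0. \<forall>g. simple_fn X F g \<and> (\<forall>x\<in>X. \<bar>indicator H x - g x\<bar> \<le> \<delta>)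
        \<longrightarrow> \<bar>simple_int X \<mu> g - \<mu> H\<bar> \<le> \<epsilon>"
      using simple_int_near_indicator[OF field add K H] \<open>\<delta> > 0\<close> \<open>\<delta> < 1/2\<close>
      by (meson less_imp_le order_trans)
  qed
qed

lemma simple_int_trace:
  assumes field: "field_on X A" and "S \<subseteq> X" and E: "E \<in> A" "E \<subseteq> S"
    and rel: "\<forall>G\<in>A. \<nu> (G \<inter> S) = \<mu> G"
    and conc: "\<forall>H\<in>trace A S. \<nu> H = \<nu> (H \<inter> E)" and "\<nu> {} = 0"
    and g: "simple_fn X A g" and h: "simple_fn S (trace A S) h" and "\<forall>x\<in>E. g x = h x"
  shows "simple_int X \<mu> g = simple_int S \<nu> h"
proof -
  have \<nu>\<mu>: "\<nu> G = \<mu> G" if "G \<in> A" "G \<subseteq> S" for G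
    using rel that by (metis Int_absorb2)
  have \<mu>_conc: "\<mu> G = \<mu> (G \<inter> E)" if "G \<in> A" for G
  proof -
    have "\<mu> G = \<nu> ((G \<inter> E) \<inter> S)"
      using rel conc Int_in_trace[OF that] that \<open>E \<subseteq> S\<close> by (metis inf_assoc inf_commute)
    then show ?thesis using rel field_on_Int[OF field that E(1)] by metis
  qed
  have "E \<subseteq> X" using assms(2,4) by blast
  have level_X: "{x\<in>X. g x = y} \<in> A" for y
    using simple_fn_level_set[OF field g] .
  have level_S: "{x\<in>S. h x = y} \<in> trace A S" for y
    using simple_fn_level_set[OF field_on_trace[OF field \<open>S \<subseteq> X\<close>] h] .
  have restrict: "{x\<in>Y. k x = y} \<inter> E = {x\<in>E. k x = y}" if "E \<subseteq> Y" for Y k y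
    using that by blast
  have "simple_int X \<mu> g = simple_int E \<mu> g"
  proof (rule simple_int_subset[OF \<open>E \<subseteq> X\<close> simple_fn_finite_range[OF g]])
    show "\<mu> {} = 0" using rel field_on_empty[OF field] \<open>\<nu> {} = 0\<close> by (metis Int_empty_left)
    show "\<mu> {x\<in>X. g x = y} = \<mu> {x\<in>E. g x = y}" for y
      using \<mu>_conc[OF level_X, of y] restrict[OF \<open>E \<subseteq> X\<close>, of g y] by simp
  qed
  also have "\<dots> = simple_int E \<nu> g"
  proof (unfold simple_int_def, intro sum.cong refl)
    fix y
    have "{x\<in>E. g x = y} \<in> A" "{x\<in>E. g x = y} \<subseteq> S"
      using field_on_Int[OF field level_X[of y] E(1)] restrict[OF \<open>E \<subseteq> X\<close>, of g y] \<open>E \<subseteq> S\<close>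
      by auto
    then show "y * \<mu> {x\<in>E. g x = y} = y * \<nu> {x\<in>E. g x = y}" using \<nu>\<mu> by simp
  qed
  also have "\<dots> = simple_int E \<nu> h"
    by (rule simple_int_cong) (fact assms(10))
  also have "\<dots> = simple_int S \<nu> h"
  proof (rule sym, rule simple_int_subset[of E S h \<nu>])
    show "\<nu> {x\<in>S. h x = y} = \<nu> {x\<in>E. h x = y}" for y
      using conc level_S[of y] restrict[OF \<open>E \<subseteq> S\<close>, of h y] by simp
  qed (use assms(4,7) simple_fn_finite_range[OF h] in auto)
  finally show ?thesis .
qed

lemma has_fa_integral_from_trace:
  assumes "field_on X A" "S \<subseteq> X" "E \<in> A" "E \<subseteq> S"
    and "\<forall>G\<in>A. \<nu> (G \<inter> S) = \<mu> G"
    and "\<forall>H\<in>trace A S. \<nu> H = \<nu> (H \<inter> E)" "\<nu> {} = 0"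
    and "has_fa_integral S (trace A S) \<nu> f r"
  shows "has_fa_integral X A \<mu> f r"
  unfolding has_fa_integral_def
proof (intro allI impI)
  fix \<epsilon> :: real assume "\<epsilon> > 0"
  then obtain \<delta> where "\<delta> > 0" and \<delta>: "\<And>h. simple_fn S (trace A S) h \<Longrightarrow>
      \<forall>x\<in>S. \<bar>f x - h x\<bar> \<le> \<delta> \<Longrightarrow> \<bar>simple_int S \<nu> h - r\<bar> \<le> \<epsilon>"
    using assms(8) unfolding has_fa_integral_def by blast
  have "\<bar>simple_int X \<mu> g - r\<bar> \<le> \<epsilon>" if "simple_fn X A g" "\<forall>x\<in>X. \<bar>f x - g x\<bar> \<le> \<delta>" for g
    using that \<delta>[OF simple_fn_trace[OF that(1) \<open>S \<subseteq> X\<close>]]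
      simple_int_trace[OF assms(1-7) that(1) simple_fn_trace] \<open>S \<subseteq> X\<close>
    by auto
  then show "\<exists>\<delta>>0. \<forall>g. simple_fn X A g \<and> (\<forall>x\<in>X. \<bar>f x - g x\<bar> \<le> \<delta>)
      \<longrightarrow> \<bar>simple_int X \<mu> g - r\<bar> \<le> \<epsilon>"
    using \<open>\<delta> > 0\<close> by blast
qed

text \<open>S itself need not lie in A; E \<in> A is what allows an approximation of f on S to be
  glued to an approximation off E.\<close>
lemma has_fa_integral_to_trace:
  assumes field: "field_on X A" and "S \<subseteq> X" and E: "E \<in> A" "E \<subseteq> S"
    and "\<forall>G\<in>A. \<nu> (G \<inter> S) = \<mu> G"
    and "\<forall>H\<in>trace A S. \<nu> H = \<nu> (H \<inter> E)" "\<nu> {} = 0"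
    and f: "f \<in> Bsp X A" and "has_fa_integral X A \<mu> f r"
  shows "has_fa_integral S (trace A S) \<nu> f r"
  unfolding has_fa_integral_def
proof (intro allI impI)
  fix \<epsilon> :: real assume "\<epsilon> > 0"
  then obtain \<delta> where "\<delta> > 0" and \<delta>: "\<And>g. simple_fn X A g \<Longrightarrow>
      \<forall>x\<in>X. \<bar>f x - g x\<bar> \<le> \<delta> \<Longrightarrow> \<bar>simple_int X \<mu> g - r\<bar> \<le> \<epsilon>"
    using assms(9) unfolding has_fa_integral_def by blast
  have "\<bar>simple_int S \<nu> h - r\<bar> \<le> \<epsilon>"
    if h: "simple_fn S (trace A S) h" "\<forall>x\<in>S. \<bar>f x - h x\<bar> \<le> \<delta>" for h
  proof -
    obtain k where k: "simple_fn X A k" "\<forall>x\<in>X. \<bar>f x - k x\<bar> \<le> \<delta>"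
      using f \<open>\<delta> > 0\<close> unfolding Bsp_def by blast
    obtain u where u: "simple_fn X A u" "\<forall>x\<in>E. u x = h x" "\<forall>x\<in>X - E. u x = k x"
      using simple_fn_glue[OF field E h(1) k(1)] .
    have "\<forall>x\<in>X. \<bar>f x - u x\<bar> \<le> \<delta>"
      using h(2) k(2) u(2,3) \<open>E \<subseteq> S\<close> by (metis Diff_iff subsetD)
    then show ?thesis using \<delta>[OF u(1)] simple_int_trace[OF assms(1-7) u(1) h(1) u(2)] by simp
  qed
  then show "\<exists>\<delta>>0. \<forall>h. simple_fn S (trace A S) h \<and> (\<forall>x\<in>S. \<bar>f x - h x\<bar> \<le> \<delta>)
      \<longrightarrow> \<bar>simple_int S \<nu> h - r\<bar> \<le> \<epsilon>"
    using \<open>\<delta> > 0\<close> by blast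
qed

lemma fa_integral_trace:
  assumes field: "field_on X A" and "S \<subseteq> X" and E: "E \<in> A" "E \<subseteq> S"
    and \<nu>: "\<nu> \<in> pba S (trace A S)" "\<nu> E = 1" and rel: "\<forall>G\<in>A. \<nu> (G \<inter> S) = \<mu> G"
    and f: "f \<in> Bsp X A"
  shows "fa_integral X A \<mu> f = fa_integral S (trace A S) \<nu> f"
proof -
  have trace_field: "field_on S (trace A S)" using field_on_trace[OF field \<open>S \<subseteq> X\<close>] .
  have conc: "\<forall>H\<in>trace A S. \<nu> H = \<nu> (H \<inter> E)"
    using pba_concentrated[OF trace_field \<nu>(1) subset_in_trace[OF E] \<nu>(2)] by blast
  have "\<nu> {} = 0"
    using fin_additive_empty[OF trace_field] \<nu>(1) unfolding pba_altdef by blast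
  with conc show ?thesis
    using has_fa_integral_from_trace[OF field \<open>S \<subseteq> X\<close> E rel] has_fa_integral_to_trace[OF field \<open>S \<subseteq> X\<close> E rel _ _ f]
    by (intro fa_integral_eqI) blast
qed

lemma wstar_closure_approx_set:
  assumes field: "field_on X F" and P: "P \<in> wstar_closure X F C" and "C \<subseteq> ba X F"
    and H: "H \<in> F" and "e > 0"
  obtains Q where "Q \<in> C" "\<bar>P H - Q H\<bar> < e"
proof -
  have "finite {indicator H} \<and> {indicator H} \<subseteq> Bsp X F" using indicator_in_Bsp[OF H] by simp
  then obtain Q where "Q \<in> C"
    and "\<bar>fa_integral X F P (indicator H) - fa_integral X F Q (indicator H)\<bar> < e"
    using P \<open>e > 0\<close> unfolding wstar_closure_def by blast
  moreover have "P \<in> ba X F" using P unfolding wstar_closure_def by blast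
  ultimately show thesis
    using that fa_integral_indicator[OF field _ H] \<open>C \<subseteq> ba X F\<close> by auto
qed

lemma wstar_closure_const:
  assumes "field_on X F" "P \<in> wstar_closure X F C" "C \<subseteq> ba X F"
    and "H \<in> F" "\<forall>Q\<in>C. Q H = c"
  shows "P H = c"
proof (rule ccontr)
  assume "P H \<noteq> c"
  then have "\<bar>P H - c\<bar> > 0" by simp
  then obtain Q where "Q \<in> C" "\<bar>P H - Q H\<bar> < \<bar>P H - c\<bar>"
    by (rule wstar_closure_approx_set[OF assms(1-4)])
  then show False using assms(5) by simp
qed

lemma wstar_closure_subset_pba:
  assumes field: "field_on X F" and C: "C \<subseteq> pba X F"
  shows "wstar_closure X F C \<subseteq> pba X F"
proof
  fix P assume P: "P \<in> wstar_closure X F C"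
  have C_ba: "C \<subseteq> ba X F" using C pba_subset_ba[OF field] by blast
  have nonneg: "P H \<ge> 0" if H: "H \<in> F" for H
  proof (rule ccontr)
    assume "\<not> P H \<ge> 0"
    then have "- P H > 0" by simp
    then obtain Q where "Q \<in> C" "\<bar>P H - Q H\<bar> < - P H"
      by (rule wstar_closure_approx_set[OF field P C_ba H])
    moreover have "Q \<in> pba X F" using C \<open>Q \<in> C\<close> by blast
    then have "Q H \<ge> 0" using H unfolding pba_altdef by blast
    ultimately show False by linarith
  qed
  have "\<forall>Q\<in>C. Q X = 1" using C by (auto simp: pba_altdef)
  then have "P X = 1" by (rule wstar_closure_const[OF field P C_ba field_on_top[OF field]])
  moreover have "fin_additive F P"
    using P unfolding wstar_closure_def by (simp add: ba_altdef)
  ultimately show "P \<in> pba X F" using nonneg unfolding pba_altdef by blast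
qed

lemma wstar_closure_empty: "wstar_closure X F {} = {}"
  unfolding wstar_closure_def using zero_less_one by blast

lemma wstar_closure_transfer:
  assumes "P \<in> ba X A" and PS: "PS \<in> wstar_closure S B C" and "Bsp X A \<subseteq> Bsp S B"
    and P_PS: "\<forall>f\<in>Bsp X A. fa_integral X A P f = fa_integral S B PS f"
    and C: "\<forall>Q\<in>C. \<exists>Q'\<in>C'. \<forall>f\<in>Bsp X A. fa_integral X A Q' f = fa_integral S B Q f"
  shows "P \<in> wstar_closure X A C'"
  unfolding wstar_closure_def
proof (intro CollectI conjI allI impI \<open>P \<in> ba X A\<close>)
  fix Fs :: "('a \<Rightarrow> real) set" and \<epsilon> :: real
  assume Fs: "finite Fs \<and> Fs \<subseteq> Bsp X A" and "\<epsilon> > 0"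
  then obtain Q where "Q \<in> C" and Q: "\<forall>f\<in>Fs. \<bar>fa_integral S B PS f - fa_integral S B Q f\<bar> < \<epsilon>"
    using PS \<open>Bsp X A \<subseteq> Bsp S B\<close> unfolding wstar_closure_def by blast
  then obtain Q' where "Q' \<in> C'" and Q': "\<forall>f\<in>Bsp X A. fa_integral X A Q' f = fa_integral S B Q f"
    using C by blast
  have "\<bar>fa_integral X A P f - fa_integral X A Q' f\<bar> < \<epsilon>" if "f \<in> Fs" for f
    using that Q Q' Fs P_PS by auto
  then show "\<exists>Q'\<in>C'. \<forall>f\<in>Fs. \<bar>fa_integral X A P f - fa_integral X A Q' f\<bar> < \<epsilon>"
    using \<open>Q' \<in> C'\<close> by blast
qed

lemma types_conv_empty: "types_conv {} s = {}"
  unfolding types_conv_def by fastforce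

lemma types_conv_const:
  assumes "\<forall>x\<in>Y. s x H = c" "Q \<in> types_conv Y s"
  shows "Q H = c"
proof -
  obtain n a w where "\<forall>k<n. w k \<in> Y" "(\<Sum>k<(n::nat). a k) = 1" "Q = (\<lambda>B. \<Sum>k<n. a k * s (w k) B)"
    using assms(2) unfolding types_conv_def by blast
  then show ?thesis using assms(1) by (simp flip: sum_distrib_right)
qed

lemma types_conv_subset_pba:
  assumes "\<forall>x\<in>Y. s x \<in> pba X F"
  shows "types_conv Y s \<subseteq> pba X F"
proof
  fix Q assume "Q \<in> types_conv Y s"
  then obtain n a w where aw: "\<forall>k<n. a k \<ge> 0 \<and> w k \<in> Y" and "(\<Sum>k<(n::nat). a k) = 1"
    and Q: "Q = (\<lambda>B. \<Sum>k<n. a k * s (w k) B)"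
    using assms unfolding types_conv_def by blast
  have "Q B \<ge> 0" if "B \<in> F" for B
    using aw assms that unfolding Q pba_altdef by (auto intro!: sum_nonneg)
  moreover have "Q X = 1"
    using types_conv_const[OF _ \<open>Q \<in> types_conv Y s\<close>] assms unfolding pba_altdef by blast
  moreover have "fin_additive F Q"
    using aw assms unfolding Q pba_altdef fin_additive_def
    by (auto simp: distrib_left sum.distrib intro!: sum.cong)
  ultimately show "Q \<in> pba X F" unfolding pba_altdef by blast
qed

lemma types_conv_transfer:
  assumes "Y \<subseteq> Y'" "\<forall>x\<in>Y. \<forall>G\<in>F. s x (h G) = s' x G" "Q \<in> types_conv Y s"
  shows "\<exists>Q'\<in>types_conv Y' s'. \<forall>G\<in>F. Q (h G) = Q' G"
proof -
  obtain n a w where "(n::nat) \<ge> 1" "\<forall>k<n. a k \<ge> 0 \<and> w k \<in> Y" "(\<Sum>k<n. a k) = 1"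
    and Q: "Q = (\<lambda>B. \<Sum>k<n. a k * s (w k) B)"
    using assms(3) unfolding types_conv_def by blast
  moreover have "\<forall>G\<in>F. Q (h G) = (\<Sum>k<n. a k * s' (w k) G)"
    using calculation assms(2) by simp
  ultimately show ?thesis
    unfolding types_conv_def using assms(1)
    by (intro bexI[of _ "\<lambda>B. \<Sum>k<n. a k * s' (w k) B"] CollectI) blast+
qed

lemma type_space_field: "type_space X A N M t \<Longrightarrow> field_on X A"
  unfolding type_space_def by blast

lemma type_space_pba: "type_space X A N M t \<Longrightarrow> i \<in> N \<Longrightarrow> x \<in> X \<Longrightarrow> t i x \<in> pba X A"
  unfolding type_space_def by blast

text \<open>Although induced_t picks an arbitrary representative G' of G \<inter> S, the value does not
  depend on the choice: a type that is certain of E \<subseteq> S only sees G' \<inter> E = G \<inter> E.\<close>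
lemma induced_t_eq:
  assumes ts: "type_space X A N M t" and "i \<in> N" "S \<subseteq> X" "w \<in> S"
    and E: "E \<in> A" "E \<subseteq> S" "t i w E = 1" and G: "G \<in> A"
  shows "induced_t A S t i w (G \<inter> S) = t i w G"
proof -
  have field: "field_on X A" using type_space_field[OF ts] .
  have t: "t i w \<in> pba X A" using type_space_pba[OF ts] assms(2-4) by blast
  define G' where "G' = (SOME G'. G' \<in> A \<and> G \<inter> S = G' \<inter> S)"
  have "\<exists>G'. G' \<in> A \<and> G \<inter> S = G' \<inter> S" using G by blast
  then have "G' \<in> A \<and> G \<inter> S = G' \<inter> S" unfolding G'_def by (rule someI_ex)
  then have "G' \<in> A" "G' \<inter> E = G \<inter> E" using \<open>E \<subseteq> S\<close> by blast+
  then have "t i w G' = t i w G"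
    using pba_concentrated[OF field t E(1,3) \<open>G' \<in> A\<close>] pba_concentrated[OF field t E(1,3) G] by simp
  then show ?thesis unfolding induced_t_def G'_def by simp
qed

lemma consistent_transfer:
  assumes "consistent X A N M t"
    and "\<And>i P. i \<in> N \<Longrightarrow> P \<in> Pi_set X A (t i) \<Longrightarrow> \<Phi> P \<in> Pi_set Y B (s i)"
  shows "consistent Y B N M' s"
  unfolding consistent_def
proof (intro allI impI)
  fix I assume I: "finite I \<and> I \<subseteq> N"
  with assms(1) have "(\<Inter>i\<in>I. Pi_set X A (t i)) \<noteq> {}" unfolding consistent_def by simp
  then obtain P where "\<And>i. i \<in> I \<Longrightarrow> P \<in> Pi_set X A (t i)" by auto
  then have "\<Phi> P \<in> (\<Inter>i\<in>I. Pi_set Y B (s i))" using assms(2) I by auto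
  then show "(\<Inter>i\<in>I. Pi_set Y B (s i)) \<noteq> {}" by auto
qed

lemma consistent_imp_nonempty:
  assumes "type_space X A N M t" "consistent X A N M t"
  shows "X \<noteq> {}"
proof -
  obtain i where "i \<in> N" using assms(1) unfolding type_space_def by auto
  moreover have "finite {i} \<and> {i} \<subseteq> N \<longrightarrow> (\<Inter>j\<in>{i}. Pi_set X A (t j)) \<noteq> {}"
    using assms(2) unfolding consistent_def by (rule spec)
  ultimately have "Pi_set X A (t i) \<noteq> {}" by simp
  then have "types_conv X (t i) \<noteq> {}" by (auto simp: Pi_set_def wstar_closure_empty)
  then show ?thesis by (auto simp: types_conv_empty)
qed

lemma cc_component_whole:
  assumes "type_space X A N M t" "X \<noteq> {}"
  shows "cc_component X A N t X"
proof -
  have "t i x X = 1" if "i \<in> N" "x \<in> X" for i x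
    using type_space_pba[OF assms(1) that] unfolding pba_altdef by blast
  then show ?thesis
    unfolding cc_component_def using assms(2) field_on_top[OF type_space_field[OF assms(1)]] by blast
qed

lemma Pi_set_induced_whole:
  assumes ts: "type_space X A N M t" and "i \<in> N"
  shows "Pi_set X A (t i) \<subseteq> Pi_set X (trace A X) (induced_t A X t i)"
proof
  have field: "field_on X A" using type_space_field[OF ts] .
  fix P assume P: "P \<in> Pi_set X A (t i)"
  have "t i x G = induced_t A X t i x G" if "x \<in> X" "G \<in> A" for x G
    using induced_t_eq[OF ts \<open>i \<in> N\<close> order_refl that(1) field_on_top[OF field] order_refl _ that(2)]
      type_space_pba[OF ts \<open>i \<in> N\<close> that(1)] field_on_subset[OF field that(2)]
    by (simp add: pba_altdef Int_absorb2)
  then have corr: "\<forall>x\<in>X. \<forall>G\<in>A. t i x G = induced_t A X t i x G" by blast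
  have conv: "\<forall>Q\<in>types_conv X (t i). \<exists>Q'\<in>types_conv X (induced_t A X t i).
      \<forall>f\<in>Bsp X A. fa_integral X A Q' f = fa_integral X A Q f"
  proof
    fix Q assume "Q \<in> types_conv X (t i)"
    then obtain Q' where "Q' \<in> types_conv X (induced_t A X t i)" and "\<forall>G\<in>A. Q G = Q' G"
      using types_conv_transfer[OF order_refl _ \<open>Q \<in> types_conv X (t i)\<close>, of A "\<lambda>G. G"] corr by blast
    then show "\<exists>Q'\<in>types_conv X (induced_t A X t i).
        \<forall>f\<in>Bsp X A. fa_integral X A Q' f = fa_integral X A Q f"
      using fa_integral_cong[OF field, of Q' Q] by auto
  qed
  have "P \<in> wstar_closure X A (types_conv X (t i))" using P unfolding Pi_set_def .
  moreover have "P \<in> ba X A" using calculation unfolding wstar_closure_def by blast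
  ultimately have "P \<in> wstar_closure X A (types_conv X (induced_t A X t i))"
    using wstar_closure_transfer[OF _ _ order_refl _ conv] by blast
  then show "P \<in> Pi_set X (trace A X) (induced_t A X t i)"
    unfolding Pi_set_def trace_self[OF field] .
qed

lemma Pi_set_lift:
  assumes ts: "type_space X A N M t" and "i \<in> N"
    and "S \<subseteq> X" and E: "E \<in> A" "E \<subseteq> S" and certain: "\<forall>x\<in>S. t i x E = 1"
    and PS: "PS \<in> Pi_set S (trace A S) (induced_t A S t i)"
  shows "(\<lambda>G. PS (G \<inter> S)) \<in> Pi_set X A (t i)"
proof -
  have field: "field_on X A" using type_space_field[OF ts] .
  have trace_field: "field_on S (trace A S)" using field_on_trace[OF field \<open>S \<subseteq> X\<close>] .
  have t: "t i x \<in> pba X A" if "x \<in> S" for x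
    using type_space_pba[OF ts \<open>i \<in> N\<close>] that \<open>S \<subseteq> X\<close> by blast
  have corr: "\<forall>x\<in>S. \<forall>G\<in>A. induced_t A S t i x (G \<inter> S) = t i x G"
    using induced_t_eq[OF ts \<open>i \<in> N\<close> \<open>S \<subseteq> X\<close> _ E] certain by blast
  let ?C = "types_conv S (induced_t A S t i)"
  have C_pba: "?C \<subseteq> pba S (trace A S)"
    using pba_trace[OF field \<open>S \<subseteq> X\<close> t E] certain corr
    by (intro types_conv_subset_pba) blast
  have C_E: "\<forall>Q\<in>?C. Q E = 1"
    using types_conv_const[of S _ E 1] corr certain E Int_absorb2[OF \<open>E \<subseteq> S\<close>] by metis
  have PS_cl: "PS \<in> wstar_closure S (trace A S) ?C" using PS unfolding Pi_set_def .
  have PS_pba: "PS \<in> pba S (trace A S)"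
    using wstar_closure_subset_pba[OF trace_field C_pba] PS_cl by blast
  have "PS E = 1"
    using wstar_closure_const[OF trace_field PS_cl _ subset_in_trace[OF E] C_E]
      C_pba pba_subset_ba[OF trace_field] by blast
  have conv: "\<forall>Q\<in>?C. \<exists>Q'\<in>types_conv X (t i).
      \<forall>f\<in>Bsp X A. fa_integral X A Q' f = fa_integral S (trace A S) Q f"
  proof
    fix Q assume "Q \<in> ?C"
    then obtain Q' where "Q' \<in> types_conv X (t i)" "\<forall>G\<in>A. Q (G \<inter> S) = Q' G"
      using types_conv_transfer[of S X A "induced_t A S t i" "\<lambda>G. G \<inter> S" "t i" Q] \<open>S \<subseteq> X\<close> corr
      by blast
    then show "\<exists>Q'\<in>types_conv X (t i).
        \<forall>f\<in>Bsp X A. fa_integral X A Q' f = fa_integral S (trace A S) Q f"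
      using fa_integral_trace[OF field \<open>S \<subseteq> X\<close> E, of Q] C_pba C_E \<open>Q \<in> ?C\<close> by blast
  qed
  have "(\<lambda>G. PS (G \<inter> S)) \<in> ba X A"
    using pba_lift[OF PS_pba \<open>S \<subseteq> X\<close>] pba_subset_ba[OF field] by blast
  moreover have "Bsp X A \<subseteq> Bsp S (trace A S)" using Bsp_trace[OF _ \<open>S \<subseteq> X\<close>] by blast
  moreover have "\<forall>f\<in>Bsp X A. fa_integral X A (\<lambda>G. PS (G \<inter> S)) f = fa_integral S (trace A S) PS f"
    using fa_integral_trace[OF field \<open>S \<subseteq> X\<close> E PS_pba \<open>PS E = 1\<close>, of "\<lambda>G. PS (G \<inter> S)"] by blast
  ultimately show ?thesis
    unfolding Pi_set_def using wstar_closure_transfer[OF _ PS_cl _ _ conv] by blast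
qed

theorem proposition3:
  fixes X :: "'w set" and A :: "'w set set" and N :: "'i set"
    and M :: "'i \<Rightarrow> 'w set set" and t :: "'i \<Rightarrow> 'w \<Rightarrow> 'w set \<Rightarrow> real"
  assumes "type_space X A N M t"
  shows "consistent X A N M t \<longleftrightarrow>
    (\<exists>S. cc_component X A N t S \<and>
       consistent S (trace A S) N (\<lambda>i. trace (M i) S) (induced_t A S t))"
proof
  assume cons: "consistent X A N M t"
  have "cc_component X A N t X"
    using cc_component_whole[OF assms consistent_imp_nonempty[OF assms cons]] .
  moreover have "consistent X (trace A X) N (\<lambda>i. trace (M i) X) (induced_t A X t)"
    by (rule consistent_transfer[OF cons, where \<Phi> = "\<lambda>P. P"]) (use Pi_set_induced_whole[OF assms] in blast)
  ultimately show "\<exists>S. cc_component X A N t S \<and>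
       consistent S (trace A S) N (\<lambda>i. trace (M i) S) (induced_t A S t)" by blast
next
  assume "\<exists>S. cc_component X A N t S \<and>
       consistent S (trace A S) N (\<lambda>i. trace (M i) S) (induced_t A S t)"
  then obtain S E where cons: "consistent S (trace A S) N (\<lambda>i. trace (M i) S) (induced_t A S t)"
    and "S \<subseteq> X" "E \<in> A" "E \<subseteq> S" "\<forall>x\<in>S. \<forall>i\<in>N. t i x E = 1"
    unfolding cc_component_def by blast
  then show "consistent X A N M t"
    using consistent_transfer[OF cons, of "\<lambda>PS G. PS (G \<inter> S)"] Pi_set_lift[OF assms] by blast
qed

end
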